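(* Let $\mathcal{X}\subseteq\mathbb{R}^d$ be nonempty, closed and convex, and let $f=\frac1n\sum_{i=1}^nf_i$, where each $f_i:\mathbb{R}^d\to\mathbb{R}$ is convex, differentiable and $L_i$-smooth on an open convex set containing $\mathcal{X}$. Let $x_\star\in\operatorname{arg\,min}_{x\in\mathcal{X}}f(x)$, assume each $f_i$ has a constrained minimizer $x_{\star,i}\in\operatorname{arg\,min}_{x\in\mathcal{X}}f_i(x)$, and let $D:=\max_i\|x_{\star,i}-x_\star\|$, $L_{\max}:=\max_iL_i$, $\bar L_2^2:=\frac1n\sum_{i=1}^nL_i^2$. Let $x_0\in\mathcal{X}$, sample $i_k$ uniformly from $\{1,\dots,n\}$ independently of the past, and set $x_{k+1}\in\operatorname{arg\,min}_{z\in\mathcal{X}\cap\mathcal{B}(x_k,t_k)}\langle\nabla f_{i_k}(x_k),z\rangle$ with $t_k:=\|\nabla f_{i_k}(x_k)-\nabla f_{i_k}(x_{\star,i_k})\|/L_{i_k}$ if $\nabla f_{i_k}(x_k)\ne\nabla f_{i_k}(x_{\star,i_k})$ and $t_k:=0$ otherwise. Then for every $K\ge1$, $$\min_{0\le k\le K-1}\mathbb{E}\|\nabla f(x_k)-\nabla f(x_\star)\|\le\sqrt{\frac{4L_{\max}^2\|x_0-x_\star\|^2}{K}+(8L_{\max}^2+2\bar L_2^2)D^2}.$$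
   Context: $\|\cdot\|$ is the Euclidean norm, $\mathcal{B}(x,t):=\{y:\|y-x\|\le t\}$; $L_i$-smooth: $\nabla f_i$ is $L_i$-Lipschitz. *)

theory Defs
  imports "HOL-Analysis.Analysis"
begin

definition idx_seqs :: "nat \<Rightarrow> nat \<Rightarrow> nat list set" where
  "idx_seqs n k = {is. length is = k \<and> set is \<subseteq> {..<n}}"

text \<open>Expectation of a function of the history when i_0, ..., i_{k-1} are
  i.i.d. uniform on {0..<n}: the uniform average over all histories.\<close>
definition unif_expect :: "nat \<Rightarrow> nat \<Rightarrow> (nat list \<Rightarrow> real) \<Rightarrow> real" where
  "unif_expect n k Y = (\<Sum>is\<in>idx_seqs n k. Y is) / real n ^ k"

end

theory Submission
  imports Defs
begin

(*
  Cocoercivity of grad f_i together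
  with the first-order optimality of x_{*,i} shows that this step contracts towards x_{*,i} at
  least as much as a gradient step would: |x_{k+1} - x_{*,i}|^2 <= |x_k - x_{*,i}|^2 - t_k^2.
  Moving the centre from x_{*,i} to x_* costs at most 4 D^2, so the squared gradient gap
  L_i^2 t_k^2 is bounded by L_max^2 times the decrease of |x_k - x_*|^2 plus a multiple of D^2.
  Averaging over i, taking expectations, telescoping over k and Jensen's inequality then bound
  the best expected gradient gap.
*)

section \<open>Smooth convex functions\<close>

lemma has_real_derivative_along_line:
  fixes f :: "'a::real_inner \<Rightarrow> real"
  assumes "(f has_derivative (\<lambda>h. g \<bullet> h)) (at (z + s *\<^sub>R d))"
  shows "((\<lambda>s. f (z + s *\<^sub>R d)) has_real_derivative g \<bullet> d) (at s)"
proof -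
  have "((\<lambda>s. z + s *\<^sub>R d) has_derivative (\<lambda>h. h *\<^sub>R d)) (at s)"
    by (auto intro!: derivative_eq_intros)
  from diff_chain_at[OF this assms] show ?thesis
    by (auto simp: o_def intro: has_derivative_imp_has_field_derivative)
qed

lemma directional_quotient_tendsto:
  fixes f :: "'a::real_inner \<Rightarrow> real"
  assumes "(f has_derivative (\<lambda>h. g \<bullet> h)) (at z)"
  shows "((\<lambda>s. (f (z + s *\<^sub>R d) - f z) / s) \<longlongrightarrow> g \<bullet> d) (at_right 0)"
proof -
  have "((\<lambda>s. f (z + s *\<^sub>R d)) has_real_derivative g \<bullet> d) (at 0)"
    by (rule has_real_derivative_along_line) (simp add: assms)
  then have "((\<lambda>s. (f (z + s *\<^sub>R d) - f z) / s) \<longlongrightarrow> g \<bullet> d) (at 0)"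
    by (simp add: has_field_derivative_iff)
  then show ?thesis
    by (rule tendsto_mono[OF at_le, rotated]) simp
qed

lemma convex_on_gradient_inequality:
  fixes f :: "'a::real_inner \<Rightarrow> real"
  assumes "convex_on U f" and "w \<in> U" and "v \<in> U"
    and "(f has_derivative (\<lambda>h. g \<bullet> h)) (at w)"
  shows "f w + g \<bullet> (v - w) \<le> f v"
proof -
  have "eventually (\<lambda>s. (f (w + s *\<^sub>R (v - w)) - f w) / s \<le> f v - f w) (at_right 0)"
    unfolding eventually_at_right_field
  proof (intro exI[of _ 1] conjI allI impI)
    fix s :: real assume s: "0 < s" "s < 1"
    have "f (w + s *\<^sub>R (v - w)) = f ((1 - s) *\<^sub>R w + s *\<^sub>R v)"
      by (simp add: algebra_simps)
    also have "\<dots> \<le> (1 - s) * f w + s * f v"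
      using convex_onD[OF assms(1), of s w v] s assms(2,3) by simp
    finally have "f (w + s *\<^sub>R (v - w)) - f w \<le> s * (f v - f w)"
      by (simp add: algebra_simps)
    with s show "(f (w + s *\<^sub>R (v - w)) - f w) / s \<le> f v - f w"
      by (simp add: pos_divide_le_eq mult.commute)
  qed simp
  with directional_quotient_tendsto[OF assms(4)] have "g \<bullet> (v - w) \<le> f v - f w"
    by (rule tendsto_upperbound) simp
  then show ?thesis by simp
qed

lemma convex_min_first_order:
  fixes f :: "'a::real_inner \<Rightarrow> real"
  assumes "convex X" and "p \<in> X" and "z \<in> X" and "\<And>y. y \<in> X \<Longrightarrow> f p \<le> f y"
    and "(f has_derivative (\<lambda>h. g \<bullet> h)) (at p)"
  shows "0 \<le> g \<bullet> (z - p)"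
proof -
  have "eventually (\<lambda>s. 0 \<le> (f (p + s *\<^sub>R (z - p)) - f p) / s) (at_right 0)"
    unfolding eventually_at_right_field
  proof (intro exI[of _ 1] conjI allI impI)
    fix s :: real assume s: "0 < s" "s < 1"
    have "p + s *\<^sub>R (z - p) = (1 - s) *\<^sub>R p + s *\<^sub>R z"
      by (simp add: algebra_simps)
    then have "p + s *\<^sub>R (z - p) \<in> X"
      using convexD_alt[OF assms(1-3), of s] s by simp
    with s show "0 \<le> (f (p + s *\<^sub>R (z - p)) - f p) / s"
      using assms(4) by simp
  qed simp
  with directional_quotient_tendsto[OF assms(5)] show ?thesis
    by (rule tendsto_lowerbound) simp
qed

lemma lipschitz_gradient_quadratic_upper_bound:
  fixes f :: "'a::real_inner \<Rightarrow> real"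
  assumes "convex U" and "z \<in> U" and "v \<in> U"
    and grad: "\<And>y. y \<in> U \<Longrightarrow> (f has_derivative (\<lambda>h. G y \<bullet> h)) (at y)"
    and lip: "L-lipschitz_on U G"
  shows "f v \<le> f z + G z \<bullet> (v - z) + L / 2 * (norm (v - z))\<^sup>2"
proof -
  define d where "d = v - z"
  define \<phi> where "\<phi> s = f (z + s *\<^sub>R d) - s * (G z \<bullet> d) - L / 2 * s\<^sup>2 * (norm d)\<^sup>2" for s
  have "\<phi> 1 \<le> \<phi> 0"
  proof (rule DERIV_nonpos_imp_nonincreasing[of 0 1 \<phi>])
    fix s :: real assume s: "0 \<le> s" "s \<le> 1"
    have "z + s *\<^sub>R d = (1 - s) *\<^sub>R z + s *\<^sub>R v" by (simp add: d_def algebra_simps)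
    then have zs: "z + s *\<^sub>R d \<in> U" using convexD_alt[OF assms(1-3), of s] s by simp
    have "(\<phi> has_real_derivative (G (z + s *\<^sub>R d) - G z) \<bullet> d - L * s * (norm d)\<^sup>2) (at s)"
      unfolding \<phi>_def inner_diff_left
      by (rule derivative_eq_intros has_real_derivative_along_line grad[OF zs] | simp)+
    moreover have "(G (z + s *\<^sub>R d) - G z) \<bullet> d \<le> L * s * (norm d)\<^sup>2"
    proof -
      have "(G (z + s *\<^sub>R d) - G z) \<bullet> d \<le> norm (G (z + s *\<^sub>R d) - G z) * norm d"
        by (rule norm_cauchy_schwarz)
      also have "\<dots> \<le> L * norm (z + s *\<^sub>R d - z) * norm d"
        by (intro mult_right_mono lipschitz_on_normD[OF lip zs assms(2)]) auto
      also have "\<dots> = L * s * (norm d)\<^sup>2" using s by (simp add: power2_eq_square)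
      finally show ?thesis .
    qed
    ultimately show "\<exists>y. (\<phi> has_real_derivative y) (at s) \<and> y \<le> 0" by force
  qed simp
  then show ?thesis by (simp add: \<phi>_def d_def)
qed

lemma smooth_convex_lower_bound_local:
  fixes f :: "'a::real_inner \<Rightarrow> real"
  assumes U: "convex U" and fc: "convex_on U f" and z: "z \<in> U" and w: "w \<in> U"
    and grad: "\<And>y. y \<in> U \<Longrightarrow> (f has_derivative (\<lambda>h. G y \<bullet> h)) (at y)"
    and lip: "L-lipschitz_on U G" and L: "L > 0"
    and ball: "cball z (norm (z - w)) \<subseteq> U"
  shows "f w + G w \<bullet> (z - w) + (norm (G z - G w))\<^sup>2 / (2 * L) \<le> f z"
proof -
  define \<Delta> where "\<Delta> = G z - G w"
  define v where "v = z - (1 / L) *\<^sub>R \<Delta>"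
  have "norm \<Delta> \<le> L * norm (z - w)"
    unfolding \<Delta>_def by (rule lipschitz_on_normD[OF lip z w])
  with L have "v \<in> U"
    using ball by (auto simp: v_def dist_norm field_simps)
  have "f w + G w \<bullet> (v - w) \<le> f v"
    by (rule convex_on_gradient_inequality[OF fc w \<open>v \<in> U\<close> grad[OF w]])
  also have "\<dots> \<le> f z + G z \<bullet> (v - z) + L / 2 * (norm (v - z))\<^sup>2"
    by (rule lipschitz_gradient_quadratic_upper_bound[OF U z \<open>v \<in> U\<close> grad lip])
  finally have "f w + G w \<bullet> (v - w) - G z \<bullet> (v - z) - L / 2 * (norm (v - z))\<^sup>2 \<le> f z"
    by simp
  moreover have "G w \<bullet> (v - w) - G z \<bullet> (v - z) = G w \<bullet> (z - w) + (G z - G w) \<bullet> \<Delta> / L"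
    by (simp add: v_def inner_diff_right inner_diff_left algebra_simps diff_divide_distrib)
  moreover have "(G z - G w) \<bullet> \<Delta> / L = (norm \<Delta>)\<^sup>2 / L"
    by (simp add: \<Delta>_def power2_norm_eq_inner)
  moreover have "L / 2 * (norm (v - z))\<^sup>2 = (norm \<Delta>)\<^sup>2 / (2 * L)"
    using L by (simp add: v_def power_divide power2_eq_square)
  moreover have "(norm \<Delta>)\<^sup>2 / L - (norm \<Delta>)\<^sup>2 / (2 * L) = (norm \<Delta>)\<^sup>2 / (2 * L)"
    by (simp add: field_simps)
  ultimately have "f w + G w \<bullet> (z - w) + (norm \<Delta>)\<^sup>2 / (2 * L) \<le> f z"
    by linarith
  then show ?thesis by (simp add: \<Delta>_def)
qed

lemma lipschitz_gradient_cocoercive_local: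
  fixes f :: "'a::real_inner \<Rightarrow> real"
  assumes U: "convex U" and fc: "convex_on U f" and z: "z \<in> U" and w: "w \<in> U"
    and grad: "\<And>y. y \<in> U \<Longrightarrow> (f has_derivative (\<lambda>h. G y \<bullet> h)) (at y)"
    and lip: "L-lipschitz_on U G" and L: "L > 0"
    and ball_z: "cball z (norm (z - w)) \<subseteq> U" and ball_w: "cball w (norm (z - w)) \<subseteq> U"
  shows "(norm (G z - G w))\<^sup>2 / L \<le> (G z - G w) \<bullet> (z - w)"
proof -
  have "f w + G w \<bullet> (z - w) + (norm (G z - G w))\<^sup>2 / (2 * L) \<le> f z"
    by (rule smooth_convex_lower_bound_local[OF U fc z w grad lip L ball_z])
  moreover have "f z + G z \<bullet> (w - z) + (norm (G w - G z))\<^sup>2 / (2 * L) \<le> f w"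
    using smooth_convex_lower_bound_local[OF U fc w z grad lip L] ball_w by (simp add: norm_minus_commute)
  ultimately show ?thesis
    by (simp add: norm_minus_commute inner_diff_left inner_diff_right field_simps)
qed

lemma norm_sum_squared_le_sum_of_squares:
  fixes v :: "'b \<Rightarrow> 'a::real_normed_vector"
  shows "(norm (\<Sum>i\<in>I. v i))\<^sup>2 \<le> (\<Sum>i\<in>I. (norm (v i))\<^sup>2) * card I"
proof -
  have "(norm (\<Sum>i\<in>I. v i))\<^sup>2 \<le> (\<Sum>i\<in>I. norm (v i))\<^sup>2"
    by (intro power_mono norm_sum) simp
  also have "\<dots> \<le> (\<Sum>i\<in>I. (norm (v i))\<^sup>2) * card I"
    by (rule sum_squared_le_sum_of_squares)
  finally show ?thesis .
qed

(*
  f is only known to be convex on the open set U, and the textbook argument evaluates f at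
  x - (G x - G p) / L, so it applies only to nearby points. Summing the local inequality along
  a fine subdivision of the segment from p to x gives the global one.
*)
lemma lipschitz_gradient_cocoercive:
  fixes f :: "'a::real_inner \<Rightarrow> real"
  assumes "open U" and U: "convex U" and fc: "convex_on U f" and x: "x \<in> U" and p: "p \<in> U"
    and grad: "\<And>y. y \<in> U \<Longrightarrow> (f has_derivative (\<lambda>h. G y \<bullet> h)) (at y)"
    and lip: "L-lipschitz_on U G" and L: "L > 0"
  shows "(norm (G x - G p))\<^sup>2 / L \<le> (G x - G p) \<bullet> (x - p)"
proof -
  obtain r where r: "r > 0" "(\<Union>y\<in>closed_segment p x. cball y r) \<subseteq> U"
    using compact_subset_open_imp_cball_epsilon_subset[OF compact_segment \<open>open U\<close>]
      closed_segment_subset[OF p x U] by metis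
  obtain N :: nat where N: "norm (x - p) / r < real N"
    using reals_Archimedean2 by blast
  with r have "N > 0"
    by (auto intro!: Nat.gr0I simp: divide_less_0_iff)
  with N r have step: "norm (x - p) / real N \<le> r"
    by (simp add: field_simps)
  define z where "z j = p + (real j / real N) *\<^sub>R (x - p)" for j
  define \<Delta> where "\<Delta> j = G (z (Suc j)) - G (z j)" for j
  have z_step: "z (Suc j) - z j = (1 / real N) *\<^sub>R (x - p)" for j
    by (simp add: z_def algebra_simps add_divide_distrib scaleR_add_left)
  have z_ball: "cball (z j) r \<subseteq> U" if "j \<le> N" for j
  proof -
    have "z j = (1 - real j / real N) *\<^sub>R p + (real j / real N) *\<^sub>R x"
      by (simp add: z_def algebra_simps)
    with that \<open>N > 0\<close> have "z j \<in> closed_segment p x"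
      unfolding in_segment by (intro exI[of _ "real j / real N"]) auto
    with r show ?thesis by blast
  qed
  have piece: "(norm (\<Delta> j))\<^sup>2 / L \<le> \<Delta> j \<bullet> (x - p) / real N" if "j < N" for j
  proof -
    have short: "norm (z (Suc j) - z j) \<le> r"
      using step \<open>N > 0\<close> by (simp add: z_step)
    have "(norm (\<Delta> j))\<^sup>2 / L \<le> \<Delta> j \<bullet> (z (Suc j) - z j)"
      unfolding \<Delta>_def
      by (rule lipschitz_gradient_cocoercive_local[OF U fc _ _ grad lip L])
         (use z_ball[of j] z_ball[of "Suc j"] that short r(1) in
           \<open>auto simp: subset_iff dist_norm norm_minus_commute\<close>)
    then show ?thesis by (simp add: z_step)
  qed
  have telescope: "(\<Sum>j<N. \<Delta> j) = G x - G p"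
    using sum_lessThan_telescope[of "\<lambda>j. G (z j)" N] \<open>N > 0\<close> by (simp add: \<Delta>_def z_def)
  have "(norm (G x - G p))\<^sup>2 / L \<le> (\<Sum>j<N. (norm (\<Delta> j))\<^sup>2 / L) * N"
    using norm_sum_squared_le_sum_of_squares[of \<Delta> "{..<N}"] L
    by (simp add: telescope divide_right_mono flip: sum_divide_distrib)
  also have "\<dots> \<le> (\<Sum>j<N. \<Delta> j \<bullet> (x - p) / real N) * N"
    by (intro mult_right_mono sum_mono piece) auto
  also have "\<dots> = (G x - G p) \<bullet> (x - p)"
    using \<open>N > 0\<close> by (simp add: telescope flip: sum_divide_distrib inner_sum_left)
  finally show ?thesis .
qed

section \<open>One step of the method\<close>

lemma quadratic_above_on_right:
  fixes A B C T :: real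
  assumes "A \<le> T" and above: "\<And>s. 0 < s \<Longrightarrow> s < 1 \<Longrightarrow> T < A + 2 * B * s + C * s\<^sup>2"
  shows "A = T" and "0 \<le> B"
proof -
  have "eventually (\<lambda>s. T \<le> A + 2 * B * s + C * s\<^sup>2) (at_right 0)"
    unfolding eventually_at_right_field using above by (intro exI[of _ 1]) force
  moreover have "((\<lambda>s. A + 2 * B * s + C * s\<^sup>2) \<longlongrightarrow> A + 2 * B * 0 + C * 0\<^sup>2) (at_right 0)"
    by (intro tendsto_intros)
  ultimately have "T \<le> A"
    by (intro tendsto_lowerbound) auto
  with \<open>A \<le> T\<close> show "A = T" by simp
  have "eventually (\<lambda>s. 0 \<le> 2 * B + C * s) (at_right 0)"
    unfolding eventually_at_right_field
  proof (intro exI[of _ 1] conjI allI impI)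
    fix s :: real assume s: "0 < s" "s < 1"
    with above \<open>A \<le> T\<close> have "0 < s * (2 * B + C * s)"
      by (fastforce simp: algebra_simps power2_eq_square)
    with s show "0 \<le> 2 * B + C * s"
      by (simp add: zero_less_mult_iff)
  qed simp
  moreover have "((\<lambda>s. 2 * B + C * s) \<longlongrightarrow> 2 * B + C * 0) (at_right 0)"
    by (intro tendsto_intros)
  ultimately show "0 \<le> B"
    using tendsto_lowerbound[of "\<lambda>s. 2 * B + C * s" "2 * B" "at_right 0" 0] by simp
qed

lemma inner_ge_norm_sq_imp_eq:
  fixes a d :: "'a::real_inner"
  assumes "norm a = t" and "norm d \<le> t" and "t\<^sup>2 \<le> a \<bullet> d"
  shows "d = a"
proof -
  have "(norm (d - a))\<^sup>2 = (norm d)\<^sup>2 - 2 * (a \<bullet> d) + (norm a)\<^sup>2"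
    by (simp add: power2_norm_eq_inner inner_diff_left inner_diff_right inner_commute)
  also have "\<dots> \<le> 0"
    using assms power_mono[OF \<open>norm d \<le> t\<close>, of 2] by simp
  finally show ?thesis by simp
qed

lemma norm_add_scaleR_squared:
  fixes u w :: "'a::real_inner"
  shows "(norm (u + s *\<^sub>R w))\<^sup>2 = (norm u)\<^sup>2 + 2 * (u \<bullet> w) * s + (norm w)\<^sup>2 * s\<^sup>2"
  unfolding power2_norm_eq_inner
  by (simp add: inner_add_left inner_add_right inner_commute power2_eq_square algebra_simps)

lemma ball_lmo_step_contracts:
  fixes g gs p x y :: "'a::real_inner"
  assumes X: "convex X" and p: "p \<in> X" and y: "y \<in> X \<inter> cball x t"
    and y_min: "\<forall>z\<in>X \<inter> cball x t. g \<bullet> y \<le> g \<bullet> z"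
    and p_opt: "\<forall>z\<in>X. 0 \<le> gs \<bullet> (z - p)"
    and L: "L > 0" and t: "t = norm (g - gs) / L"
    and cocoercive: "(norm (g - gs))\<^sup>2 / L \<le> (g - gs) \<bullet> (x - p)"
  shows "(norm (y - p))\<^sup>2 \<le> (norm (x - p))\<^sup>2 - t\<^sup>2"
proof -
  define a where "a = (1 / L) *\<^sub>R (g - gs)"
  have norm_a: "norm a = t"
    using L by (simp add: a_def t)
  have a_x: "t\<^sup>2 \<le> a \<bullet> (x - p)"
    using divide_right_mono[OF cocoercive, of L] L
    by (simp add: a_def t power_divide power2_eq_square)
  have x_y: "norm (x - y) \<le> t"
    using y by (simp add: dist_norm)
  \<comment> \<open>Either the segment from y towards p re-enters the ball, and then the optimality of y
    forces y to be the gradient step x - a; or it does not, and then y lies on the sphere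
    with p - y pointing outwards.\<close>
  show ?thesis
  proof (cases "\<exists>s. 0 < s \<and> s < 1 \<and> y + s *\<^sub>R (p - y) \<in> cball x t")
    case True
    then obtain s where s: "0 < s" "s < 1" and s_ball: "y + s *\<^sub>R (p - y) \<in> cball x t"
      by blast
    have "y + s *\<^sub>R (p - y) = (1 - s) *\<^sub>R y + s *\<^sub>R p"
      by (simp add: algebra_simps)
    then have "y + s *\<^sub>R (p - y) \<in> X"
      using convexD_alt[OF X _ p, of y s] y s by simp
    with y_min s_ball have "g \<bullet> y \<le> g \<bullet> (y + s *\<^sub>R (p - y))"
      by blast
    with s have "0 \<le> g \<bullet> (p - y)"
      by (simp add: inner_add_right zero_le_mult_iff)
    moreover have "0 \<le> gs \<bullet> (y - p)"
      using p_opt y by blast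
    ultimately have "0 \<le> a \<bullet> (p - y)"
      using L by (simp add: a_def inner_diff_left inner_diff_right divide_le_cancel)
    with a_x have "t\<^sup>2 \<le> a \<bullet> (x - y)"
      by (simp add: inner_diff_right)
    with norm_a x_y have "x - y = a"
      by (rule inner_ge_norm_sq_imp_eq)
    then have "(norm (y - p))\<^sup>2 = (norm (x - p))\<^sup>2 - 2 * (a \<bullet> (x - p)) + (norm a)\<^sup>2"
      by (simp add: algebra_simps power2_norm_eq_inner inner_diff_left inner_diff_right
          inner_commute flip: \<open>x - y = a\<close>)
    with a_x norm_a show ?thesis by simp
  next
    case False
    define c where "c = (y - x) \<bullet> (p - y)"
    have "t\<^sup>2 < (norm (y - x))\<^sup>2 + 2 * c * s + (norm (p - y))\<^sup>2 * s\<^sup>2" if "0 < s" "s < 1" for s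
    proof -
      from False that have "t < norm ((y - x) + s *\<^sub>R (p - y))"
        by (auto simp: dist_norm norm_minus_commute algebra_simps)
      then have "t\<^sup>2 < (norm ((y - x) + s *\<^sub>R (p - y)))\<^sup>2"
        using x_y norm_ge_zero[of "x - y"] by (intro power_strict_mono) linarith+
      then show ?thesis
        by (simp add: norm_add_scaleR_squared c_def)
    qed
    moreover have "(norm (y - x))\<^sup>2 \<le> t\<^sup>2"
      using x_y by (simp add: norm_minus_commute power_mono)
    ultimately have "(norm (y - x))\<^sup>2 = t\<^sup>2" and "0 \<le> c"
      using quadratic_above_on_right by blast+
    moreover have "(norm (y - p))\<^sup>2 = (norm (x - p))\<^sup>2 - (norm (y - x))\<^sup>2 - 2 * c"
      by (simp add: c_def power2_norm_eq_inner inner_diff_left inner_diff_right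
          inner_commute algebra_simps)
    ultimately show ?thesis by simp
  qed
qed

lemma contraction_recentered:
  fixes p q x y :: "'a::real_inner"
  assumes contr: "(norm (y - p))\<^sup>2 \<le> (norm (x - p))\<^sup>2 - t\<^sup>2" and step: "norm (y - x) \<le> t"
  shows "t\<^sup>2 \<le> 2 * ((norm (x - q))\<^sup>2 - (norm (y - q))\<^sup>2) + 4 * (norm (p - q))\<^sup>2"
proof -
  have "(norm (x - q))\<^sup>2 - (norm (y - q))\<^sup>2
      = (norm (x - p))\<^sup>2 - (norm (y - p))\<^sup>2 - 2 * ((y - x) \<bullet> (p - q))"
    by (simp add: power2_norm_eq_inner inner_diff_left inner_diff_right inner_commute algebra_simps)
  moreover have "(y - x) \<bullet> (p - q) \<le> t * norm (p - q)"
    using norm_cauchy_schwarz[of "y - x" "p - q"] mult_right_mono[OF step norm_ge_zero[of "p - q"]]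
    by linarith
  moreover have "t * norm (p - q) \<le> t\<^sup>2 / 4 + (norm (p - q))\<^sup>2"
    using sum_squares_bound[of "t / 2" "norm (p - q)"] by (simp add: power2_eq_square field_simps)
  ultimately show ?thesis
    using contr by (simp add: field_simps)
qed

lemma ball_lmo_step_gradient_bound:
  fixes f :: "'a::real_inner \<Rightarrow> real"
  assumes "open U" and U: "convex U" and X: "convex X" and "X \<subseteq> U" and fc: "convex_on U f"
    and grad: "\<And>y. y \<in> U \<Longrightarrow> (f has_derivative (\<lambda>h. G y \<bullet> h)) (at y)"
    and lip: "L-lipschitz_on U G" and "L \<le> M"
    and p: "p \<in> X" and p_min: "\<forall>y\<in>X. f p \<le> f y"
    and x: "x \<in> X"
    and t: "t = (if G x \<noteq> G p then norm (G x - G p) / L else 0)"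
    and y: "y \<in> X \<inter> cball x t" and y_min: "\<forall>z\<in>X \<inter> cball x t. G x \<bullet> y \<le> G x \<bullet> z"
  shows "(norm (G x - G p))\<^sup>2 \<le> M\<^sup>2 * (2 * ((norm (x - q))\<^sup>2 - (norm (y - q))\<^sup>2) + 4 * (norm (p - q))\<^sup>2)"
proof (cases "G x = G p")
  case True
  with t y show ?thesis by simp
next
  case False
  have xU: "x \<in> U" and pU: "p \<in> U"
    using x p \<open>X \<subseteq> U\<close> by auto
  have "L \<noteq> 0"
    using False lipschitz_on_normD[OF lip xU pU] by auto
  with lipschitz_on_nonneg[OF lip] have L: "L > 0" by simp
  from False t have t': "t = norm (G x - G p) / L" by simp
  have "(norm (y - p))\<^sup>2 \<le> (norm (x - p))\<^sup>2 - t\<^sup>2"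
  proof (rule ball_lmo_step_contracts[OF X p y y_min _ L t'])
    show "\<forall>z\<in>X. 0 \<le> G p \<bullet> (z - p)"
      using convex_min_first_order[OF X p _ _ grad[OF pU]] p_min by blast
    show "(norm (G x - G p))\<^sup>2 / L \<le> (G x - G p) \<bullet> (x - p)"
      by (rule lipschitz_gradient_cocoercive[OF \<open>open U\<close> U fc xU pU grad lip L])
  qed
  moreover have "norm (y - x) \<le> t"
    using y by (simp add: dist_norm norm_minus_commute)
  ultimately have t_bound: "t\<^sup>2 \<le> 2 * ((norm (x - q))\<^sup>2 - (norm (y - q))\<^sup>2) + 4 * (norm (p - q))\<^sup>2"
    by (rule contraction_recentered)
  have "(norm (G x - G p))\<^sup>2 = L\<^sup>2 * t\<^sup>2"
    using L by (simp add: t' power_divide)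
  also have "\<dots> \<le> M\<^sup>2 * t\<^sup>2"
    using L \<open>L \<le> M\<close> by (intro mult_right_mono power_mono) auto
  also have "\<dots> \<le> M\<^sup>2 * (2 * ((norm (x - q))\<^sup>2 - (norm (y - q))\<^sup>2) + 4 * (norm (p - q))\<^sup>2)"
    using t_bound by (intro mult_left_mono) auto
  finally show ?thesis .
qed

section \<open>Uniform averages over index histories\<close>

lemma idx_seqs_eq_lists: "idx_seqs n k = {is. set is \<subseteq> {..<n} \<and> length is = k}"
  by (auto simp: idx_seqs_def)

lemma card_idx_seqs: "card (idx_seqs n k) = n ^ k"
  unfolding idx_seqs_eq_lists by (simp add: card_lists_length_eq)

lemma idx_seqs_0: "idx_seqs n 0 = {[]}"
  by (auto simp: idx_seqs_def)

lemma idx_seqs_Suc: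
  "idx_seqs n (Suc k) = (\<lambda>(is, i). is @ [i]) ` (idx_seqs n k \<times> {..<n})"
proof (intro set_eqI iffI)
  fix js assume js: "js \<in> idx_seqs n (Suc k)"
  then have "js \<noteq> []"
    by (auto simp: idx_seqs_def)
  then obtain ks i where js_eq: "js = ks @ [i]"
    by (metis rev_exhaust)
  with js have "ks \<in> idx_seqs n k" and "i < n"
    by (auto simp: idx_seqs_def)
  with js_eq show "js \<in> (\<lambda>(is, i). is @ [i]) ` (idx_seqs n k \<times> {..<n})"
    by force
qed (auto simp: idx_seqs_def)

lemma sum_idx_seqs_Suc:
  "(\<Sum>js\<in>idx_seqs n (Suc k). h js) = (\<Sum>is\<in>idx_seqs n k. \<Sum>i<n. h (is @ [i]))"
proof -
  have "inj_on (\<lambda>(is, i). is @ [i]) (idx_seqs n k \<times> {..<n})"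
    by (auto simp: inj_on_def)
  then have "(\<Sum>js\<in>idx_seqs n (Suc k). h js) = (\<Sum>(is, i)\<in>idx_seqs n k \<times> {..<n}. h (is @ [i]))"
    unfolding idx_seqs_Suc by (subst sum.reindex) (simp_all add: case_prod_unfold)
  then show ?thesis
    by (simp add: sum.cartesian_product)
qed

lemma unif_expect_0: "unif_expect n 0 h = h []"
  by (simp add: unif_expect_def idx_seqs_0)

lemma unif_expect_Suc:
  assumes "n > 0"
  shows "unif_expect n (Suc k) h = unif_expect n k (\<lambda>is. (\<Sum>i<n. h (is @ [i])) / real n)"
  using assms unfolding unif_expect_def sum_idx_seqs_Suc
  by (simp add: sum_divide_distrib[symmetric] field_simps)

lemma unif_expect_const:
  assumes "n > 0"
  shows "unif_expect n k (\<lambda>_. c) = c"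
  using assms by (simp add: unif_expect_def card_idx_seqs)

lemma unif_expect_add:
  "unif_expect n k (\<lambda>is. h1 is + h2 is) = unif_expect n k h1 + unif_expect n k h2"
  by (simp add: unif_expect_def sum.distrib add_divide_distrib)

lemma unif_expect_cmult:
  "unif_expect n k (\<lambda>is. c * h is) = c * unif_expect n k h"
  by (simp add: unif_expect_def sum_distrib_left)

lemma unif_expect_diff:
  "unif_expect n k (\<lambda>is. h1 is - h2 is) = unif_expect n k h1 - unif_expect n k h2"
  by (simp add: unif_expect_def sum_subtractf diff_divide_distrib)

lemma unif_expect_mono:
  assumes "\<And>is. is \<in> idx_seqs n k \<Longrightarrow> h1 is \<le> h2 is"
  shows "unif_expect n k h1 \<le> unif_expect n k h2"
  unfolding unif_expect_def using assms by (intro divide_right_mono sum_mono) auto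

lemma unif_expect_nonneg:
  assumes "\<And>is. is \<in> idx_seqs n k \<Longrightarrow> 0 \<le> h is"
  shows "0 \<le> unif_expect n k h"
  unfolding unif_expect_def using assms by (intro divide_nonneg_nonneg sum_nonneg) auto

lemma unif_expect_squared_le:
  assumes "n > 0"
  shows "(unif_expect n k h)\<^sup>2 \<le> unif_expect n k (\<lambda>is. (h is)\<^sup>2)"
proof -
  have "(\<Sum>is\<in>idx_seqs n k. h is)\<^sup>2 \<le> (\<Sum>is\<in>idx_seqs n k. (h is)\<^sup>2) * real n ^ k"
    using sum_squared_le_sum_of_squares[of h "idx_seqs n k"] by (simp add: card_idx_seqs)
  with assms show ?thesis
    by (simp add: unif_expect_def power_divide power2_eq_square field_simps)
qed

section \<open>The stochastic method\<close>

locale stochastic_ball_lmo =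
  fixes X U :: "'a::real_inner set"
    and n :: nat
    and f :: "nat \<Rightarrow> 'a \<Rightarrow> real"
    and G :: "nat \<Rightarrow> 'a \<Rightarrow> 'a"
    and L :: "nat \<Rightarrow> real"
    and xstar :: 'a
    and xs :: "nat \<Rightarrow> 'a"
    and x :: "nat list \<Rightarrow> 'a"
  assumes n_pos: "n > 0"
    and X_convex: "convex X" and U_open: "open U" and U_convex: "convex U" and X_subset_U: "X \<subseteq> U"
    and f_convex: "\<And>i. i < n \<Longrightarrow> convex_on U (f i)"
    and f_grad: "\<And>i y. i < n \<Longrightarrow> y \<in> U \<Longrightarrow> (f i has_derivative (\<lambda>h. G i y \<bullet> h)) (at y)"
    and f_smooth: "\<And>i. i < n \<Longrightarrow> (L i)-lipschitz_on U (G i)"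
    and xstar_in: "xstar \<in> X"
    and xs_min: "\<And>i. i < n \<Longrightarrow> xs i \<in> X \<and> (\<forall>y\<in>X. f i (xs i) \<le> f i y)"
    and x_Nil: "x [] \<in> X"
    and x_step: "\<And>is i. is \<in> idx_seqs n (length is) \<Longrightarrow> i < n \<Longrightarrow>
       (let t = (if G i (x is) \<noteq> G i (xs i)
                 then norm (G i (x is) - G i (xs i)) / L i else 0)
        in x (is @ [i]) \<in> X \<inter> cball (x is) t \<and>
           (\<forall>z\<in>X \<inter> cball (x is) t. G i (x is) \<bullet> x (is @ [i]) \<le> G i (x is) \<bullet> z))"
begin

definition L_max :: real where "L_max = (MAX i\<in>{..<n}. L i)"

definition L_sq_mean :: real where "L_sq_mean = (\<Sum>i<n. (L i)\<^sup>2) / real n"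

definition D :: real where "D = (MAX i\<in>{..<n}. norm (xs i - xstar))"

definition dist_sq :: "nat list \<Rightarrow> real" where "dist_sq is = (norm (x is - xstar))\<^sup>2"

definition grad_gap :: "nat list \<Rightarrow> real" where
  "grad_gap is = norm ((1 / real n) *\<^sub>R (\<Sum>i<n. G i (x is)) - (1 / real n) *\<^sub>R (\<Sum>i<n. G i xstar))"

lemma x_in_X: "set is \<subseteq> {..<n} \<Longrightarrow> x is \<in> X"
proof (induction "is" rule: rev_induct)
  case Nil
  show ?case by (rule x_Nil)
next
  case (snoc i "is")
  then show ?case
    using x_step[of "is" i] by (simp add: idx_seqs_def Let_def)
qed

lemma component_gap_bound:
  assumes "set is \<subseteq> {..<n}" and i: "i < n"
  shows "(norm (G i (x is) - G i xstar))\<^sup>2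
    \<le> 4 * L_max\<^sup>2 * (dist_sq is - dist_sq (is @ [i])) + (8 * L_max\<^sup>2 + 2 * (L i)\<^sup>2) * D\<^sup>2"
proof -
  have L_le: "L i \<le> L_max" and D_ge: "norm (xs i - xstar) \<le> D"
    using i by (auto simp: L_max_def D_def intro!: Max_ge)
  have "(norm (G i (x is) - G i (xs i)))\<^sup>2
      \<le> L_max\<^sup>2 * (2 * (dist_sq is - dist_sq (is @ [i])) + 4 * (norm (xs i - xstar))\<^sup>2)"
    unfolding dist_sq_def
    using ball_lmo_step_gradient_bound[OF U_open U_convex X_convex X_subset_U f_convex[OF i]
        f_grad[OF i] f_smooth[OF i] L_le _ _ x_in_X[OF assms(1)] refl] x_step[of "is" i] xs_min[OF i] assms
    by (simp add: idx_seqs_def Let_def)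
  also have "\<dots> \<le> L_max\<^sup>2 * (2 * (dist_sq is - dist_sq (is @ [i])) + 4 * D\<^sup>2)"
    using D_ge by (intro mult_left_mono add_left_mono power_mono) auto
  finally have near: "(norm (G i (x is) - G i (xs i)))\<^sup>2
      \<le> L_max\<^sup>2 * (2 * (dist_sq is - dist_sq (is @ [i])) + 4 * D\<^sup>2)" .
  have "norm (G i (xs i) - G i xstar) \<le> L i * norm (xs i - xstar)"
    using lipschitz_on_normD[OF f_smooth[OF i]] xs_min[OF i] xstar_in X_subset_U by auto
  also have "\<dots> \<le> L i * D"
    using D_ge lipschitz_on_nonneg[OF f_smooth[OF i]] by (intro mult_left_mono)
  finally have far: "(norm (G i (xs i) - G i xstar))\<^sup>2 \<le> (L i)\<^sup>2 * D\<^sup>2"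
    by (metis norm_ge_zero power_mono power_mult_distrib)
  have "norm (G i (x is) - G i xstar) \<le> norm (G i (x is) - G i (xs i)) + norm (G i (xs i) - G i xstar)"
    using norm_triangle_ineq[of "G i (x is) - G i (xs i)" "G i (xs i) - G i xstar"] by simp
  then have "(norm (G i (x is) - G i xstar))\<^sup>2
      \<le> (norm (G i (x is) - G i (xs i)) + norm (G i (xs i) - G i xstar))\<^sup>2"
    by (rule power_mono) simp
  also have "\<dots> \<le> 2 * (norm (G i (x is) - G i (xs i)))\<^sup>2 + 2 * (norm (G i (xs i) - G i xstar))\<^sup>2"
    using sum_squares_bound[of "norm (G i (x is) - G i (xs i))" "norm (G i (xs i) - G i xstar)"]
    by (simp add: power2_sum)
  finally have "(norm (G i (x is) - G i xstar))\<^sup>2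
      \<le> 2 * (norm (G i (x is) - G i (xs i)))\<^sup>2 + 2 * (norm (G i (xs i) - G i xstar))\<^sup>2" .
  with near far show ?thesis
    by (simp add: algebra_simps)
qed

lemma grad_gap_squared_bound:
  assumes "set is \<subseteq> {..<n}"
  shows "(grad_gap is)\<^sup>2 \<le> 4 * L_max\<^sup>2 * (dist_sq is - (\<Sum>i<n. dist_sq (is @ [i])) / real n)
    + (8 * L_max\<^sup>2 + 2 * L_sq_mean) * D\<^sup>2"
proof -
  have "grad_gap is = norm (\<Sum>i<n. G i (x is) - G i xstar) / real n"
    using n_pos by (simp add: grad_gap_def sum_subtractf flip: scaleR_diff_right)
  then have "(grad_gap is)\<^sup>2 \<le> (\<Sum>i<n. (norm (G i (x is) - G i xstar))\<^sup>2) * real n / (real n)\<^sup>2"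
    using norm_sum_squared_le_sum_of_squares[of "\<lambda>i. G i (x is) - G i xstar" "{..<n}"]
    by (simp add: power_divide divide_right_mono)
  also have "\<dots> = (\<Sum>i<n. (norm (G i (x is) - G i xstar))\<^sup>2) / real n"
    using n_pos by (simp add: power2_eq_square)
  also have "\<dots> \<le> (\<Sum>i<n. 4 * L_max\<^sup>2 * (dist_sq is - dist_sq (is @ [i]))
      + (8 * L_max\<^sup>2 + 2 * (L i)\<^sup>2) * D\<^sup>2) / real n"
    by (intro divide_right_mono sum_mono component_gap_bound[OF assms]) auto
  also have "\<dots> = 4 * L_max\<^sup>2 * (dist_sq is - (\<Sum>i<n. dist_sq (is @ [i])) / real n)
      + (8 * L_max\<^sup>2 + 2 * L_sq_mean) * D\<^sup>2"
    using n_pos by (simp add: L_sq_mean_def sum.distrib sum_subtractf field_simps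
        flip: sum_distrib_left sum_distrib_right)
  finally show ?thesis .
qed

lemma expected_grad_gap_squared_bound:
  "unif_expect n k (\<lambda>is. (grad_gap is)\<^sup>2)
    \<le> 4 * L_max\<^sup>2 * (unif_expect n k dist_sq - unif_expect n (Suc k) dist_sq)
      + (8 * L_max\<^sup>2 + 2 * L_sq_mean) * D\<^sup>2"
proof -
  have "unif_expect n k (\<lambda>is. (grad_gap is)\<^sup>2)
      \<le> unif_expect n k (\<lambda>is. 4 * L_max\<^sup>2 * (dist_sq is - (\<Sum>i<n. dist_sq (is @ [i])) / real n)
        + (8 * L_max\<^sup>2 + 2 * L_sq_mean) * D\<^sup>2)"
    by (intro unif_expect_mono grad_gap_squared_bound) (simp add: idx_seqs_def)
  also have "\<dots> = 4 * L_max\<^sup>2 * (unif_expect n k dist_sq - unif_expect n (Suc k) dist_sq)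
      + (8 * L_max\<^sup>2 + 2 * L_sq_mean) * D\<^sup>2"
    using n_pos by (simp add: unif_expect_add unif_expect_cmult unif_expect_diff unif_expect_const
        unif_expect_Suc)
  finally show ?thesis .
qed

lemma min_expected_grad_gap_le:
  assumes "K > 0"
  shows "(MIN k\<in>{..<K}. unif_expect n k grad_gap)
    \<le> sqrt (4 * L_max\<^sup>2 * (norm (x [] - xstar))\<^sup>2 / real K + (8 * L_max\<^sup>2 + 2 * L_sq_mean) * D\<^sup>2)"
proof -
  define C where "C = (8 * L_max\<^sup>2 + 2 * L_sq_mean) * D\<^sup>2"
  define m where "m k = unif_expect n k (\<lambda>is. (grad_gap is)\<^sup>2)" for k
  have "(\<Sum>k<K. m k)
      \<le> (\<Sum>k<K. 4 * L_max\<^sup>2 * (unif_expect n k dist_sq - unif_expect n (Suc k) dist_sq) + C)"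
    unfolding m_def C_def by (intro sum_mono expected_grad_gap_squared_bound)
  also have "\<dots> = 4 * L_max\<^sup>2 * (unif_expect n 0 dist_sq - unif_expect n K dist_sq) + real K * C"
    using sum_lessThan_telescope'[of "\<lambda>k. unif_expect n k dist_sq" K]
    by (simp add: sum.distrib flip: sum_distrib_left)
  also have "\<dots> \<le> 4 * L_max\<^sup>2 * (norm (x [] - xstar))\<^sup>2 + real K * C"
    using unif_expect_nonneg[of n K dist_sq]
    by (simp add: unif_expect_0 dist_sq_def mult_left_mono)
  finally have sum_bound: "(\<Sum>k<K. m k) \<le> 4 * L_max\<^sup>2 * (norm (x [] - xstar))\<^sup>2 + real K * C" .
  obtain k where k: "k < K" and k_min: "m k = (MIN k\<in>{..<K}. m k)"
  proof -
    have "(MIN k\<in>{..<K}. m k) \<in> m ` {..<K}"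
      using assms by (intro Min_in) auto
    then show thesis
      using that by (metis imageE lessThan_iff)
  qed
  have "real K * m k \<le> (\<Sum>k<K. m k)"
    using sum_bounded_below[of "{..<K}" "m k" m] by (simp add: k_min)
  with sum_bound assms have "m k \<le> 4 * L_max\<^sup>2 * (norm (x [] - xstar))\<^sup>2 / real K + C"
    by (simp add: field_simps)
  moreover have "unif_expect n k grad_gap \<le> sqrt (m k)"
    using unif_expect_squared_le[OF n_pos, of k grad_gap] by (simp add: m_def real_le_rsqrt)
  moreover have "(MIN k\<in>{..<K}. unif_expect n k grad_gap) \<le> unif_expect n k grad_gap"
    using k by simp
  ultimately show ?thesis
    unfolding C_def by (meson order_trans real_sqrt_le_iff)
qed

end

theorem theorem14:
  fixes X U :: "'a::euclidean_space set"
    and n :: nat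
    and f :: "nat \<Rightarrow> 'a \<Rightarrow> real"
    and G :: "nat \<Rightarrow> 'a \<Rightarrow> 'a"
    and L :: "nat \<Rightarrow> real"
    and xstar x0 :: 'a
    and xs :: "nat \<Rightarrow> 'a"
    and x :: "nat list \<Rightarrow> 'a"
    and K :: nat
  assumes n_pos: "n \<ge> 1"
    and X_ne: "X \<noteq> {}" and X_closed: "closed X" and X_convex: "convex X"
    and U_open: "open U" and U_convex: "convex U" and XU: "X \<subseteq> U"
    and f_convex: "\<And>i. i < n \<Longrightarrow> convex_on U (f i)"
    and f_grad: "\<And>i y. i < n \<Longrightarrow> y \<in> U \<Longrightarrow>
                   (f i has_derivative (\<lambda>h. G i y \<bullet> h)) (at y)"
    and f_smooth: "\<And>i. i < n \<Longrightarrow> lipschitz_on (L i) U (G i)"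
    and xstar_min: "xstar \<in> X \<and> (\<forall>y\<in>X. (\<Sum>i<n. f i xstar) / real n \<le> (\<Sum>i<n. f i y) / real n)"
    and xs_min: "\<And>i. i < n \<Longrightarrow> xs i \<in> X \<and> (\<forall>y\<in>X. f i (xs i) \<le> f i y)"
    and x0_in: "x0 \<in> X"
    and x_init: "x [] = x0"
    and x_step: "\<And>is i. is \<in> idx_seqs n (length is) \<Longrightarrow> i < n \<Longrightarrow>
       (let t = (if G i (x is) \<noteq> G i (xs i)
                 then norm (G i (x is) - G i (xs i)) / L i else 0)
        in x (is @ [i]) \<in> X \<inter> cball (x is) t \<and>
           (\<forall>z\<in>X \<inter> cball (x is) t. G i (x is) \<bullet> x (is @ [i]) \<le> G i (x is) \<bullet> z))"
    and K_pos: "K \<ge> 1"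
  shows "(MIN k\<in>{..<K}. unif_expect n k
            (\<lambda>is. norm ((1 / real n) *\<^sub>R (\<Sum>i<n. G i (x is)) - (1 / real n) *\<^sub>R (\<Sum>i<n. G i xstar))))
         \<le> sqrt (4 * (MAX i\<in>{..<n}. L i)^2 * (norm (x0 - xstar))^2 / real K
                 + (8 * (MAX i\<in>{..<n}. L i)^2 + 2 * ((\<Sum>i<n. (L i)^2) / real n))
                   * (MAX i\<in>{..<n}. norm (xs i - xstar))^2)"
proof -
  interpret stochastic_ball_lmo X U n f G L xstar xs x
    using assms by unfold_locales auto
  show ?thesis
    using min_expected_grad_gap_le[of K] K_pos
    by (simp add: x_init grad_gap_def[abs_def] L_max_def L_sq_mean_def D_def)
qed

end
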